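(* Let $k\ge\ell\ge0$ be integers. (1) $$\binom{k}{\ell}_{\mathbb{Z},\mathbb{N}}=\prod_{b=2}^k b^{\beta(k,\ell,b)},\qquad \beta(k,\ell,b):=\sum_{i=1}^\infty\left(\left\lfloor\frac{k}{b^i}\right\rfloor-\left\lfloor\frac{\ell}{b^i}\right\rfloor-\left\lfloor\frac{k-\ell}{b^i}\right\rfloor\right).$$ (2) For every $b\ge2$, $$\beta(k,\ell,b)=\frac{1}{b-1}\big(d_b(\ell)+d_b(k-\ell)-d_b(k)\big),$$ where $d_b(j)$ denotes the sum of the base-$b$ digits of $j$.
   Context: $\mathbb{N}=\{0,1,2,\dots\}$. For an integer $b\ge0$ and $a\in\mathbb{Z}$ define $\operatorname{ord}_b(a):=\sup\{k\in\mathbb{N}: a\mathbb{Z}\subseteq b^k\mathbb{Z}\}$ (convention $0^0=1$); thus for $b\ge2$ it is the largest $k$ with $b^k\mid a$ ($+\infty$ for $a=0$), $\operatorname{ord}_0(a)=+\infty$ if $a=0$ and $0$ otherwise, and $\operatorname{ord}_1(a)=+\infty$. For nonempty $S\subseteq\mathbb{Z}$, a $b$-ordering of $S$ is a sequence $(a_i)_{i\ge0}$ in $S$ such that for each $i\ge1$, $a_i$ attains $\min_{a'\in S}\sum_{j=0}^{i-1}\operatorname{ord}_b(a'-a_j)$; the $b$-exponent sequence is $\alpha_k(S,b):=\sum_{j=0}^{k-1}\operatorname{ord}_b(a_k-a_j)$ for any $b$-ordering (independent of the choice). For $\mathcal{T}\subseteq\mathbb{N}$ the generalized factorial is $k!_{S,\mathcal{T}}:=\prod_{b\in\mathcal{T}}b^{\alpha_k(S,b)}$,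 with conventions $b^{+\infty}=0$ for $b=0$ and $b\ge2$, $1^{+\infty}=1$, and $b^0=1$ for all $b\in\mathbb{N}$. The generalized binomial coefficient is $\binom{k}{\ell}_{S,\mathcal{T}}:=k!_{S,\mathcal{T}}/(\ell!_{S,\mathcal{T}}(k-\ell)!_{S,\mathcal{T}})$ for $0\le\ell\le k<|S|$. *)

theory Defs
  imports Complex_Main "HOL-Library.Extended_Nat"
begin

text \<open>ord_b(a) = sup {k. a Z \<subseteq> b^k Z} = sup {k. b^k dvd a} (with 0^0 = 1), valued in enat.\<close>
definition ordb :: "nat \<Rightarrow> int \<Rightarrow> enat" where
  "ordb b a = Sup (enat ` {k. (int b) ^ k dvd a})"

definition is_b_ordering :: "int set \<Rightarrow> nat \<Rightarrow> (nat \<Rightarrow> int) \<Rightarrow> bool" where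
  "is_b_ordering S b a \<longleftrightarrow> (\<forall>i. a i \<in> S) \<and>
     (\<forall>i\<ge>1. \<forall>a'\<in>S. (\<Sum>j<i. ordb b (a i - a j)) \<le> (\<Sum>j<i. ordb b (a' - a j)))"

definition alpha_seq :: "int set \<Rightarrow> nat \<Rightarrow> nat \<Rightarrow> enat" where
  "alpha_seq S b k = (let a = (SOME a. is_b_ordering S b a) in (\<Sum>j<k. ordb b (a k - a j)))"

definition epow :: "nat \<Rightarrow> enat \<Rightarrow> nat" where
  "epow b e = (case e of enat n \<Rightarrow> b ^ n | \<infinity> \<Rightarrow> (if b = 1 then 1 else 0))"

text \<open>Generalized factorial k!_{S,T} = prod_{b in T} b^{alpha_k(S,b)}: zero if some factor is
  zero, otherwise the product of the (finitely many) factors different from 1.\<close>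
definition gen_fact :: "int set \<Rightarrow> nat set \<Rightarrow> nat \<Rightarrow> nat" where
  "gen_fact S T k =
     (if \<exists>b\<in>T. epow b (alpha_seq S b k) = 0 then 0
      else \<Prod>b\<in>{b\<in>T. epow b (alpha_seq S b k) \<noteq> 1}. epow b (alpha_seq S b k))"

definition gen_binom :: "int set \<Rightarrow> nat set \<Rightarrow> nat \<Rightarrow> nat \<Rightarrow> real" where
  "gen_binom S T k l = real (gen_fact S T k) / (real (gen_fact S T l) * real (gen_fact S T (k - l)))"

definition beta :: "nat \<Rightarrow> nat \<Rightarrow> nat \<Rightarrow> real" where
  "beta k l b = (\<Sum>i. real_of_int (\<lfloor>real k / real b ^ (i+1)\<rfloor> - \<lfloor>real l / real b ^ (i+1)\<rfloor>
                    - \<lfloor>real (k - l) / real b ^ (i+1)\<rfloor>))"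

fun digsum :: "nat \<Rightarrow> nat \<Rightarrow> nat" where
  "digsum b j = (if b < 2 \<or> j = 0 then 0 else j mod b + digsum b (j div b))"

end

(* Fix b >= 2 and a b-ordering a of Z, and let c_e(x) count the a_j with j < n that are
   congruent to x modulo b^e. For x different from all a_j,
   sum_{j<n} ord_b(x - a_j) = sum_{e>=1} c_e(x). By induction on n the counts are balanced:
   for each e the values of c_e differ by at most one, so their minimum is floor(n/b^e), and
   lifting minimisers from modulus b^e to b^(e+1) yields a point attaining all these minima at
   once. Hence a_n attains them as well, which keeps the counts balanced, and
   alpha_n(Z,b) = sum_{i>=1} floor(n/b^i). A fresh integer shows alpha_n(Z,0) = 0 and b = 1
   contributes 1, so n!_{Z,N} = prod_{b=2}^n b^(sum_i floor(n/b^i)). Part (1) follows by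
   comparing exponents, part (2) from Legendre's identity
   (b-1) sum_{i>=1} floor(n/b^i) = n - d_b(n). *)

theory Submission
  imports Defs
begin

lemma ordb_0_right [simp]: "ordb b 0 = \<infinity>"
proof -
  have "infinite (range enat)"
    by (rule range_inj_infinite) (simp add: inj_on_def)
  then show ?thesis
    unfolding ordb_def Sup_enat_def by simp
qed

lemma ordb_0_left:
  assumes "d \<noteq> 0"
  shows "ordb 0 d = 0"
proof -
  have "{e. int 0 ^ e dvd d} = {0}"
    using assms by (auto simp: power_0_left split: if_splits)
  then show ?thesis
    unfolding ordb_def by (simp add: zero_enat_def)
qed

lemma ordb_eq_card_dvd_powers:
  assumes b: "b \<ge> 2" and d: "d \<noteq> 0" and M: "\<bar>d\<bar> < int b ^ M"
  shows "ordb b d = enat (card {e \<in> {1..M}. int b ^ e dvd d})"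
proof -
  define S where "S = {e. int b ^ e dvd d}"
  have S_less: "e < M" if "e \<in> S" for e
  proof -
    have "int b ^ e \<le> \<bar>d\<bar>"
      using dvd_imp_le_int[OF d, of "int b ^ e"] that by (simp add: S_def)
    then have "int b ^ e < int b ^ M"
      using M by linarith
    then show "e < M"
      using b by (simp add: power_strict_increasing_iff)
  qed
  then have "finite S"
    by (auto simp: finite_nat_set_iff_bounded)
  define v where "v = Max S"
  have "0 \<in> S"
    by (simp add: S_def)
  then have "v \<in> S"
    using Max_in[OF \<open>finite S\<close>] v_def by blast
  have S_eq: "S = {..v}"
  proof
    show "S \<subseteq> {..v}"
      using Max_ge[OF \<open>finite S\<close>] v_def by auto
    show "{..v} \<subseteq> S"
      using \<open>v \<in> S\<close> dvd_trans[OF le_imp_power_dvd] by (auto simp: S_def)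
  qed
  have "ordb b d = Sup (enat ` {..v})"
    unfolding ordb_def S_def[symmetric] S_eq ..
  also have "\<dots> = enat v"
    by (rule antisym) (auto intro: Sup_least Sup_upper)
  also have "{e \<in> {1..M}. e \<in> S} = {1..v}"
    using S_eq S_less[OF \<open>v \<in> S\<close>] by auto
  then have "v = card {e \<in> {1..M}. int b ^ e dvd d}"
    by (simp add: S_def)
  finally show ?thesis .
qed

lemma is_b_ordering_le:
  assumes "is_b_ordering S b a" and "x \<in> S"
  shows "(\<Sum>j<i. ordb b (a i - a j)) \<le> (\<Sum>j<i. ordb b (x - a j))"
  using assms by (cases "i = 0") (auto simp: is_b_ordering_def)

lemma ex_least_image:
  fixes f :: "'a \<Rightarrow> 'b::wellorder"
  assumes "S \<noteq> {}"
  shows "\<exists>x\<in>S. \<forall>y\<in>S. f x \<le> f y"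
proof -
  have "(LEAST v. v \<in> f ` S) \<in> f ` S"
    using assms by (auto intro: LeastI)
  then obtain x where "x \<in> S" and "f x = (LEAST v. v \<in> f ` S)"
    by auto
  then show ?thesis
    by (metis Least_le image_eqI)
qed

function greedy_b_ordering :: "int set \<Rightarrow> nat \<Rightarrow> nat \<Rightarrow> int" where
  "greedy_b_ordering S b n = (SOME x. x \<in> S \<and>
     (\<forall>y\<in>S. (\<Sum>j<n. ordb b (x - greedy_b_ordering S b j))
              \<le> (\<Sum>j<n. ordb b (y - greedy_b_ordering S b j))))"
  by auto
termination
  by (relation "measure (\<lambda>(S, b, n). n)") auto

declare greedy_b_ordering.simps [simp del]

lemma is_b_ordering_greedy:
  assumes "S \<noteq> {}"
  shows "is_b_ordering S b (greedy_b_ordering S b)"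
proof -
  let ?a = "greedy_b_ordering S b"
  have "?a i \<in> S \<and> (\<forall>y\<in>S. (\<Sum>j<i. ordb b (?a i - ?a j)) \<le> (\<Sum>j<i. ordb b (y - ?a j)))" for i
  proof -
    have "\<exists>x. x \<in> S \<and> (\<forall>y\<in>S. (\<Sum>j<i. ordb b (x - ?a j)) \<le> (\<Sum>j<i. ordb b (y - ?a j)))"
      using ex_least_image[OF assms, of "\<lambda>x. \<Sum>j<i. ordb b (x - ?a j)"] by blast
    then show ?thesis
      unfolding greedy_b_ordering.simps[of S b i] by (rule someI_ex)
  qed
  then show ?thesis
    unfolding is_b_ordering_def by blast
qed

lemma is_b_ordering_some:
  assumes "S \<noteq> {}"
  shows "is_b_ordering S b (SOME a. is_b_ordering S b a)"
  by (rule someI[of "is_b_ordering S b", OF is_b_ordering_greedy[OF assms]])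

definition cong_count :: "nat \<Rightarrow> (nat \<Rightarrow> int) \<Rightarrow> nat \<Rightarrow> nat \<Rightarrow> int \<Rightarrow> nat" where
  "cong_count b a n e x = (\<Sum>j<n. of_bool (int b ^ e dvd x - a j))"

lemma cong_count_0 [simp]: "cong_count b a 0 e x = 0"
  by (simp add: cong_count_def)

lemma cong_count_Suc:
  "cong_count b a (Suc n) e x = cong_count b a n e x + of_bool (int b ^ e dvd x - a n)"
  by (simp add: cong_count_def)

lemma cong_count_exponent_0 [simp]: "cong_count b a n 0 x = n"
  by (simp add: cong_count_def)

lemma cong_count_antimono:
  assumes "e \<le> e'"
  shows "cong_count b a n e' x \<le> cong_count b a n e x"
  unfolding cong_count_def
  by (rule sum_mono) (use assms dvd_trans[OF le_imp_power_dvd] in auto)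

lemma cong_count_cong:
  assumes "int b ^ e dvd x - y"
  shows "cong_count b a n e x = cong_count b a n e y"
proof -
  have "int b ^ e dvd x - a j \<longleftrightarrow> int b ^ e dvd y - a j" for j
    using dvd_add_right_iff[OF assms, of "y - a j"] by simp
  then show ?thesis
    by (simp add: cong_count_def)
qed

lemma card_dvd_add_lessThan:
  assumes "m > 0"
  shows "card {t. t < m \<and> int m dvd q + int t} = 1"
proof -
  define t0 where "t0 = nat ((- q) mod int m)"
  have "int m dvd q + int t \<longleftrightarrow> t = t0" if "t < m" for t
  proof -
    have "int m dvd q + int t \<longleftrightarrow> int t mod int m = (- q) mod int m"
      by (simp add: mod_eq_dvd_iff add.commute)
    also have "\<dots> \<longleftrightarrow> t = t0"
      using that assms by (auto simp: t0_def)
    finally show ?thesis .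
  qed
  moreover have "t0 < m"
    using assms by (simp add: t0_def nat_less_iff)
  ultimately have "{t. t < m \<and> int m dvd q + int t} = {t0}"
    by auto
  then show ?thesis
    by simp
qed

lemma card_lifts_dvd:
  assumes "b > 0"
  shows "card {t. t < b \<and> int b ^ Suc e dvd d + int t * int b ^ e} = of_bool (int b ^ e dvd d)"
proof (cases "int b ^ e dvd d")
  case False
  have "\<not> int b ^ Suc e dvd d + int t * int b ^ e" for t
  proof
    assume "int b ^ Suc e dvd d + int t * int b ^ e"
    then have "int b ^ e dvd d + int t * int b ^ e"
      by (rule dvd_trans[OF le_imp_power_dvd, rotated]) simp
    then show False
      using False by (simp add: dvd_add_left_iff)
  qed
  then show ?thesis
    using False by simp
next
  case True
  then obtain q where q: "d = int b ^ e * q" ..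
  have "int b ^ Suc e dvd d + int t * int b ^ e \<longleftrightarrow> int b dvd q + int t" for t
  proof -
    have "d + int t * int b ^ e = int b ^ e * (q + int t)"
      by (simp add: q algebra_simps)
    then show ?thesis
      using assms by (simp add: mult.commute)
  qed
  then show ?thesis
    using True card_dvd_add_lessThan[OF assms, of q] by simp
qed

lemma cong_count_split:
  assumes "b > 0"
  shows "cong_count b a n e x = (\<Sum>t<b. cong_count b a n (Suc e) (x + int t * int b ^ e))"
proof -
  have "of_bool (int b ^ e dvd x - a j)
      = (\<Sum>t<b. of_bool (int b ^ Suc e dvd x - a j + int t * int b ^ e) :: nat)" for j
    using card_lifts_dvd[OF assms, of e "x - a j"] by (simp add: Int_def)
  then show ?thesis
    unfolding cong_count_def by (simp only: sum.swap[of _ "{..<b}"]) (simp add: algebra_simps)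
qed

lemma sum_cong_count_residues:
  assumes "b > 0"
  shows "(\<Sum>r<b ^ e. cong_count b a n e (int r)) = n"
proof -
  have "(\<Sum>r<b ^ e. of_bool (int b ^ e dvd int r - a j) :: nat) = 1" for j
    using card_dvd_add_lessThan[of "b ^ e" "- a j"] assms by (simp add: Int_def add.commute)
  then show ?thesis
    unfolding cong_count_def by (subst sum.swap) simp
qed

lemma cong_count_eq_div_above:
  assumes b: "b \<ge> 2" and "n \<le> M" and "M \<le> e"
    and level_M: "cong_count b a n M x = n div b ^ M"
  shows "cong_count b a n e x = n div b ^ e"
proof -
  have "n < b ^ M"
    using power_gt_expt[of b M] b \<open>n \<le> M\<close> by simp
  moreover have "b ^ M \<le> b ^ e"
    using b \<open>M \<le> e\<close> by (intro power_increasing) auto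
  moreover have "cong_count b a n e x \<le> cong_count b a n M x"
    using \<open>M \<le> e\<close> by (rule cong_count_antimono)
  ultimately show ?thesis
    using level_M by simp
qed

definition balanced :: "nat \<Rightarrow> (nat \<Rightarrow> int) \<Rightarrow> nat \<Rightarrow> bool" where
  "balanced b a n \<longleftrightarrow> (\<forall>e x y. cong_count b a n e x \<le> cong_count b a n e y + 1)"

lemma balanced_cong_count_bounds:
  assumes "b > 0" and "balanced b a n"
  shows "n div b ^ e \<le> cong_count b a n e x" and "cong_count b a n e x \<le> n div b ^ e + 1"
proof -
  let ?c = "cong_count b a n e"
  obtain x0 where x0: "\<And>y. ?c x0 \<le> ?c y"
    using ex_has_least_nat[of "\<lambda>_. True" 0 ?c] by blast
  have le_Suc: "?c y \<le> Suc (?c x0)" for y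
    using assms(2) by (simp add: balanced_def)
  define r0 where "r0 = nat (x0 mod int (b ^ e))"
  have "r0 < b ^ e"
    using assms(1) by (simp add: r0_def nat_less_iff)
  have "int b ^ e dvd x0 - int r0"
    using assms(1) by (simp add: r0_def mod_eq_dvd_iff[symmetric])
  then have "?c (int r0) = ?c x0"
    by (simp add: cong_count_cong)
  have sum: "(\<Sum>r<b ^ e. ?c (int r)) = n"
    using assms(1) by (rule sum_cong_count_residues)
  have "(\<Sum>r<b ^ e. ?c x0) \<le> (\<Sum>r<b ^ e. ?c (int r))"
    by (rule sum_mono) (rule x0)
  then have lower: "b ^ e * ?c x0 \<le> n"
    using sum by simp
  have "(\<Sum>r<b ^ e. ?c (int r)) < (\<Sum>r<b ^ e. Suc (?c x0))"
  proof (rule sum_strict_mono_ex1)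
    show "\<exists>r\<in>{..<b ^ e}. ?c (int r) < Suc (?c x0)"
      using \<open>r0 < b ^ e\<close> \<open>?c (int r0) = ?c x0\<close> by (intro bexI[of _ r0]) auto
  qed (use le_Suc in auto)
  then have upper: "n < b ^ e * Suc (?c x0)"
    using sum by simp
  have "?c x0 = n div b ^ e"
    using div_nat_eqI[OF lower upper] by simp
  then show "n div b ^ e \<le> ?c x" and "?c x \<le> n div b ^ e + 1"
    using x0 le_Suc by (metis Suc_eq_plus1)+
qed

lemma balanced_ex_cong_count_min:
  assumes b: "b \<ge> 2" and "balanced b a n"
  shows "\<exists>x. \<forall>e. cong_count b a n e x = n div b ^ e"
proof -
  note lower = balanced_cong_count_bounds(1)[OF _ assms(2)]
  have "\<exists>x. \<forall>e\<le>E. cong_count b a n e x = n div b ^ e" for E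
  proof (induction E)
    case 0
    show ?case
      by simp
  next
    case (Suc E)
    then obtain x where x: "\<forall>e\<le>E. cong_count b a n e x = n div b ^ e"
      by blast
    define lift where "lift t = x + int t * int b ^ E" for t
    txt \<open>The counts of the \<open>b\<close> lifts add up to \<open>n div b ^ E\<close>, which is too small for all
      of them to exceed the lower bound \<open>n div b ^ Suc E\<close>.\<close>
    have "\<exists>t<b. cong_count b a n (Suc E) (lift t) = n div b ^ Suc E"
    proof (rule ccontr)
      assume "\<not> ?thesis"
      then have "n div b ^ Suc E + 1 \<le> cong_count b a n (Suc E) (lift t)" if "t < b" for t
        using lower[of "Suc E" "lift t"] b that by fastforce
      then have "b * (n div b ^ Suc E + 1) \<le> (\<Sum>t<b. cong_count b a n (Suc E) (lift t))"
        using sum_mono[of "{..<b}" "\<lambda>_. n div b ^ Suc E + 1"] by simp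
      also have "\<dots> = n div b ^ E"
        using cong_count_split[of b a n E x] x b by (simp add: lift_def)
      finally have "b * ((n div b ^ E) div b + 1) \<le> n div b ^ E"
        by (metis div_mult2_eq power_Suc2)
      moreover have "n div b ^ E < b * ((n div b ^ E) div b + 1)"
        using dividend_less_times_div[of b "n div b ^ E"] b by simp
      ultimately show False
        by simp
    qed
    then obtain t where t: "cong_count b a n (Suc E) (lift t) = n div b ^ Suc E"
      by blast
    have "cong_count b a n e (lift t) = n div b ^ e" if "e \<le> E" for e
    proof -
      have "int b ^ e dvd lift t - x"
        using le_imp_power_dvd[OF that, of "int b"] by (simp add: lift_def)
      then show ?thesis
        using cong_count_cong x that by metis
    qed
    then show ?case
      using t le_Suc_eq by blast
  qed
  then obtain x where x: "\<forall>e\<le>n. cong_count b a n e x = n div b ^ e"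
    by blast
  have "cong_count b a n e x = n div b ^ e" for e
  proof (cases "e \<le> n")
    case False
    show ?thesis
      by (rule cong_count_eq_div_above[OF b order_refl]) (use x False in auto)
  qed (use x in simp)
  then show ?thesis
    by blast
qed

text \<open>For \<open>b \<ge> 2\<close> the terms with \<open>i \<ge> n\<close> vanish, so this is \<open>\<Sum>i\<ge>1. n div b ^ i\<close>.\<close>

definition legendre_sum :: "nat \<Rightarrow> nat \<Rightarrow> nat" where
  "legendre_sum b n = (\<Sum>i<n. n div b ^ Suc i)"

lemma legendre_sum_eq_sum:
  assumes "b \<ge> 2" and "n \<le> N"
  shows "(\<Sum>i<N. n div b ^ Suc i) = legendre_sum b n"
  unfolding legendre_sum_def
proof (rule sum.mono_neutral_right)
  show "\<forall>i\<in>{..<N} - {..<n}. n div b ^ Suc i = 0"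
  proof
    fix i
    assume "i \<in> {..<N} - {..<n}"
    then have "n < b ^ Suc i"
      using power_gt_expt[of b "Suc i"] assms(1) by simp
    then show "n div b ^ Suc i = 0"
      by simp
  qed
qed (use assms(2) in auto)

lemma legendre_sum_eq_0:
  assumes "n < b"
  shows "legendre_sum b n = 0"
proof -
  have "n < b ^ Suc i" for i
  proof -
    have "b ^ 1 \<le> b ^ Suc i"
      using assms by (intro power_increasing) auto
    then show ?thesis
      using assms by (metis order_less_le_trans power_one_right)
  qed
  then show ?thesis
    by (simp add: legendre_sum_def)
qed

lemma legendre_sum_div:
  assumes "b \<ge> 2"
  shows "legendre_sum b n = n div b + legendre_sum b (n div b)"
proof (cases n)
  case (Suc m)
  have "legendre_sum b n = n div b + (\<Sum>i<m. n div b ^ Suc (Suc i))"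
    unfolding legendre_sum_def Suc by (simp only: sum.lessThan_Suc_shift) simp
  also have "(\<Sum>i<m. n div b ^ Suc (Suc i)) = (\<Sum>i<m. n div b div b ^ Suc i)"
    by (simp add: div_mult2_eq)
  also have "\<dots> = legendre_sum b (n div b)"
    using assms Suc by (intro legendre_sum_eq_sum) (simp_all add: less_Suc_eq_le[symmetric])
  finally show ?thesis .
qed (simp add: legendre_sum_def)

lemma ex_int_power_bound:
  assumes "b \<ge> 2" and "finite Z"
  shows "\<exists>M\<ge>N. \<forall>z\<in>Z. \<bar>z\<bar> < int b ^ M"
proof -
  define M where "M = N + nat (\<Sum>z\<in>Z. \<bar>z\<bar>)"
  have "\<bar>z\<bar> < int b ^ M" if "z \<in> Z" for z
  proof -
    have "\<bar>z\<bar> \<le> (\<Sum>z\<in>Z. \<bar>z\<bar>)"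
      using that assms(2) by (intro member_le_sum) auto
    also have "\<dots> \<le> int M"
      by (simp add: M_def)
    also have "\<dots> < int b ^ M"
      using power_gt_expt[of b M] assms(1) by (simp flip: of_nat_power)
    finally show ?thesis .
  qed
  then show ?thesis
    by (metis M_def le_add1)
qed

lemma sum_ordb_eq_sum_cong_count:
  assumes "b \<ge> 2" and "x \<notin> a ` {..<n}" and "\<forall>j<n. \<bar>x - a j\<bar> < int b ^ M"
  shows "(\<Sum>j<n. ordb b (x - a j)) = enat (\<Sum>e\<in>{1..M}. cong_count b a n e x)"
proof -
  have "ordb b (x - a j) = of_nat (\<Sum>e\<in>{1..M}. of_bool (int b ^ e dvd x - a j))" if "j < n" for j
    using ordb_eq_card_dvd_powers[OF assms(1), of "x - a j" M] assms(2,3) that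
    by (auto simp: of_nat_eq_enat Int_def)
  then have "(\<Sum>j<n. ordb b (x - a j)) = of_nat (\<Sum>j<n. \<Sum>e\<in>{1..M}. of_bool (int b ^ e dvd x - a j))"
    by (simp add: of_nat_sum)
  also have "(\<Sum>j<n. \<Sum>e\<in>{1..M}. of_bool (int b ^ e dvd x - a j)) = (\<Sum>e\<in>{1..M}. cong_count b a n e x)"
    unfolding cong_count_def by (rule sum.swap)
  finally show ?thesis
    by (simp add: of_nat_eq_enat)
qed

lemma sum_cong_count_balanced:
  assumes b: "b \<ge> 2" and bal: "balanced b a n" and "n \<le> M"
  shows "legendre_sum b n \<le> (\<Sum>e\<in>{1..M}. cong_count b a n e x)"
    and "(\<Sum>e\<in>{1..M}. cong_count b a n e x) = legendre_sum b n
      \<longleftrightarrow> (\<forall>e. cong_count b a n e x = n div b ^ e)"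
proof -
  have legendre: "legendre_sum b n = (\<Sum>e\<in>{1..M}. n div b ^ e)"
    using legendre_sum_eq_sum[OF b \<open>n \<le> M\<close>] by (simp add: sum.atLeast1_atMost_eq)
  have lower: "n div b ^ e \<le> cong_count b a n e x" for e
    using b bal by (intro balanced_cong_count_bounds) auto
  then show "legendre_sum b n \<le> (\<Sum>e\<in>{1..M}. cong_count b a n e x)"
    unfolding legendre by (intro sum_mono)
  show "(\<Sum>e\<in>{1..M}. cong_count b a n e x) = legendre_sum b n
      \<longleftrightarrow> (\<forall>e. cong_count b a n e x = n div b ^ e)"
  proof
    assume sum_eq: "(\<Sum>e\<in>{1..M}. cong_count b a n e x) = legendre_sum b n"
    have levels: "cong_count b a n e x = n div b ^ e" if "e \<in> {1..M}" for e
      using sum_mono_inv[OF legendre[symmetric, folded sum_eq] lower that] by simp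
    have "cong_count b a n M x = n div b ^ M"
      using levels[of M] by (cases "M = 0") auto
    show "\<forall>e. cong_count b a n e x = n div b ^ e"
    proof
      fix e
      show "cong_count b a n e x = n div b ^ e"
      proof (cases "e \<le> M")
        case False
        then show ?thesis
          using cong_count_eq_div_above[OF b \<open>n \<le> M\<close> _ \<open>cong_count b a n M x = n div b ^ M\<close>]
          by simp
      qed (use levels in \<open>cases "e = 0"\<close>, auto)
    qed
  qed (simp add: legendre)
qed

lemma sum_ordb_balanced:
  assumes b: "b \<ge> 2" and bal: "balanced b a n"
  shows "enat (legendre_sum b n) \<le> (\<Sum>j<n. ordb b (y - a j))"
    and "(\<Sum>j<n. ordb b (y - a j)) = enat (legendre_sum b n)
      \<longleftrightarrow> (\<forall>e. cong_count b a n e y = n div b ^ e)"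
proof -
  have "enat (legendre_sum b n) \<le> (\<Sum>j<n. ordb b (y - a j)) \<and>
    ((\<Sum>j<n. ordb b (y - a j)) = enat (legendre_sum b n)
      \<longleftrightarrow> (\<forall>e. cong_count b a n e y = n div b ^ e))"
  proof (cases "y \<in> a ` {..<n}")
    case True
    then obtain i where "i < n" and "y = a i"
      by blast
    then have "\<infinity> \<le> (\<Sum>j<n. ordb b (y - a j))"
      using member_le_sum[of i "{..<n}" "\<lambda>j. ordb b (y - a j)"] by simp
    moreover have "cong_count b a n n y \<noteq> n div b ^ n"
      using \<open>i < n\<close> \<open>y = a i\<close> power_gt_expt[of b n] b by (auto simp: cong_count_def)
    ultimately show ?thesis
      by auto
  next
    case False
    have "finite ((\<lambda>j. y - a j) ` {..<n})"
      by simp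
    from ex_int_power_bound[OF b this] obtain M
      where "n \<le> M" and "\<forall>z\<in>(\<lambda>j. y - a j) ` {..<n}. \<bar>z\<bar> < int b ^ M"
      by blast
    then have sum_eq: "(\<Sum>j<n. ordb b (y - a j)) = enat (\<Sum>e\<in>{1..M}. cong_count b a n e y)"
      by (intro sum_ordb_eq_sum_cong_count[OF b False]) auto
    show ?thesis
      unfolding sum_eq enat_ord_simps(1) enat.inject
      using sum_cong_count_balanced[OF b bal \<open>n \<le> M\<close>, of y] by blast
  qed
  then show "enat (legendre_sum b n) \<le> (\<Sum>j<n. ordb b (y - a j))"
    and "(\<Sum>j<n. ordb b (y - a j)) = enat (legendre_sum b n)
      \<longleftrightarrow> (\<forall>e. cong_count b a n e y = n div b ^ e)"
    by blast+
qed

lemma b_ordering_step: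
  assumes b: "b \<ge> 2" and ord: "is_b_ordering UNIV b a" and bal: "balanced b a n"
  shows "(\<Sum>j<n. ordb b (a n - a j)) = enat (legendre_sum b n)"
    and "cong_count b a n e (a n) = n div b ^ e"
proof -
  obtain x where "\<forall>e. cong_count b a n e x = n div b ^ e"
    using balanced_ex_cong_count_min[OF b bal] by blast
  then have "(\<Sum>j<n. ordb b (x - a j)) = enat (legendre_sum b n)"
    using sum_ordb_balanced(2)[OF b bal] by blast
  with is_b_ordering_le[OF ord UNIV_I, of n x]
  have "(\<Sum>j<n. ordb b (a n - a j)) \<le> enat (legendre_sum b n)"
    by (rule ord_le_eq_trans)
  with sum_ordb_balanced(1)[OF b bal]
  show sum_eq: "(\<Sum>j<n. ordb b (a n - a j)) = enat (legendre_sum b n)"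
    by (rule antisym[rotated])
  show "cong_count b a n e (a n) = n div b ^ e"
    using sum_ordb_balanced(2)[OF b bal] sum_eq by blast
qed

lemma balanced_b_ordering:
  assumes b: "b \<ge> 2" and ord: "is_b_ordering UNIV b a"
  shows "balanced b a n"
proof (induction n)
  case 0
  show ?case
    by (simp add: balanced_def)
next
  case (Suc n)
  have an_minimal: "cong_count b a n e (a n) \<le> cong_count b a n e y" for e y
  proof -
    have "cong_count b a n e (a n) = n div b ^ e"
      by (rule b_ordering_step(2)[OF b ord Suc.IH])
    also have "\<dots> \<le> cong_count b a n e y"
      using b by (intro balanced_cong_count_bounds(1)[OF _ Suc.IH]) simp
    finally show ?thesis .
  qed
  show ?case
    unfolding balanced_def
  proof (intro allI)
    fix e x y
    show "cong_count b a (Suc n) e x \<le> cong_count b a (Suc n) e y + 1"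
    proof (cases "int b ^ e dvd x - a n")
      case True
      then have "cong_count b a n e x = cong_count b a n e (a n)"
        by (rule cong_count_cong)
      then show ?thesis
        using True an_minimal[of e y] by (simp add: cong_count_Suc)
    next
      case False
      then have "cong_count b a (Suc n) e x = cong_count b a n e x"
        by (simp add: cong_count_Suc)
      also have "\<dots> \<le> cong_count b a n e y + 1"
        using Suc.IH by (simp add: balanced_def)
      also have "\<dots> \<le> cong_count b a (Suc n) e y + 1"
        by (simp add: cong_count_Suc)
      finally show ?thesis .
    qed
  qed
qed

lemma alpha_seq_UNIV:
  assumes "b \<ge> 2"
  shows "alpha_seq UNIV b k = enat (legendre_sum b k)"
proof -
  have "is_b_ordering UNIV b (SOME a. is_b_ordering UNIV b a)"
    by (rule is_b_ordering_some[OF UNIV_not_empty])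
  then show ?thesis
    unfolding alpha_seq_def Let_def
    using assms by (intro b_ordering_step(1) balanced_b_ordering)
qed

lemma alpha_seq_UNIV_0: "alpha_seq UNIV 0 k = 0"
proof -
  define a where "a = (SOME a. is_b_ordering UNIV 0 a)"
  have ord: "is_b_ordering UNIV 0 a"
    unfolding a_def by (rule is_b_ordering_some[OF UNIV_not_empty])
  obtain x :: int where "x \<notin> a ` {..<k}"
    using ex_new_if_finite[OF infinite_UNIV_int] by blast
  then have "x - a j \<noteq> 0" if "j < k" for j
    using that by auto
  then have "(\<Sum>j<k. ordb 0 (x - a j)) = 0"
    by (simp add: ordb_0_left)
  then have "(\<Sum>j<k. ordb 0 (a k - a j)) = 0"
    using is_b_ordering_le[OF ord UNIV_I, of k x] by (metis le_zero_eq)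
  then show ?thesis
    unfolding alpha_seq_def Let_def a_def[symmetric] .
qed

lemma gen_fact_UNIV:
  assumes "n \<le> k"
  shows "gen_fact UNIV UNIV n = (\<Prod>b\<in>{2..k}. b ^ legendre_sum b n)"
proof -
  define p where "p b = epow b (alpha_seq UNIV b n)" for b
  have p: "p b = (if b < 2 then 1 else b ^ legendre_sum b n)" for b
    by (cases "b < 2")
      (auto simp: p_def epow_def alpha_seq_UNIV alpha_seq_UNIV_0 zero_enat_def less_2_cases_iff
        split: enat.split)
  have "b \<in> {2..k}" if "p b \<noteq> 1" for b
  proof -
    have "b \<ge> 2" and "legendre_sum b n \<noteq> 0"
      using that by (auto simp: p split: if_splits)
    then have "b \<le> n"
      using legendre_sum_eq_0[of n b] by (meson not_le)
    then show ?thesis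
      using \<open>b \<ge> 2\<close> assms by simp
  qed
  then have "(\<Prod>b\<in>{b. p b \<noteq> 1}. p b) = (\<Prod>b\<in>{2..k}. p b)"
    by (intro prod.mono_neutral_left) auto
  moreover have "\<not> (\<exists>b\<in>UNIV. p b = 0)"
    using p by simp
  then have "gen_fact UNIV UNIV n = (\<Prod>b\<in>{b \<in> UNIV. p b \<noteq> 1}. p b)"
    unfolding gen_fact_def p_def[symmetric] by (rule if_not_P)
  ultimately have "gen_fact UNIV UNIV n = (\<Prod>b\<in>{2..k}. p b)"
    by simp
  then show ?thesis
    by (simp add: p)
qed

text \<open>The defining equation of \<^const>\<open>digsum\<close> makes the simplifier loop.\<close>

declare digsum.simps [simp del]

lemma digsum_0 [simp]: "digsum b 0 = 0"
  by (simp add: digsum.simps)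

lemma digsum_div:
  assumes "b \<ge> 2"
  shows "digsum b n = n mod b + digsum b (n div b)"
  using assms by (cases "n = 0") (simp_all add: digsum.simps[of b n])

lemma legendre_sum_digsum:
  assumes "b \<ge> 2"
  shows "(b - 1) * legendre_sum b n + digsum b n = n"
proof (induction n rule: less_induct)
  case (less n)
  show ?case
  proof (cases "n = 0")
    case False
    have "n div b < n"
      using False assms by simp
    then have IH: "(b - 1) * legendre_sum b (n div b) + digsum b (n div b) = n div b"
      by (rule less)
    have "(b - 1) * legendre_sum b n + digsum b n = (b - 1) * (n div b) + n div b + n mod b"
      using IH by (simp add: legendre_sum_div[OF assms, of n] digsum_div[OF assms, of n] algebra_simps)
    also have "\<dots> = b * (n div b) + n mod b"
      using assms by (cases b) simp_all
    also have "\<dots> = n"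
      by simp
    finally show ?thesis .
  qed (simp add: legendre_sum_def)
qed

lemma beta_eq_legendre_sum:
  assumes b: "b \<ge> 2" and "l \<le> k"
  shows "beta k l b
    = real (legendre_sum b k) - real (legendre_sum b l) - real (legendre_sum b (k - l))"
proof -
  define g where "g i = real (k div b ^ Suc i) - real (l div b ^ Suc i) - real ((k - l) div b ^ Suc i)"
    for i
  have floor_div: "\<lfloor>real m / real b ^ (i + 1)\<rfloor> = int (m div b ^ Suc i)" for m i
    using floor_divide_of_nat_eq[of m "b ^ Suc i"] by simp
  have "g i = 0" if "i \<ge> k" for i
  proof -
    have "k < b ^ Suc i"
      using power_gt_expt[of b "Suc i"] b that by simp
    then show ?thesis
      using \<open>l \<le> k\<close> by (simp add: g_def)
  qed
  then have "suminf g = (\<Sum>i<k. g i)"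
    by (intro suminf_finite) auto
  moreover have "beta k l b = suminf g"
    unfolding beta_def floor_div g_def by simp
  ultimately have "beta k l b = (\<Sum>i<k. g i)"
    by simp
  also have "\<dots> = real (legendre_sum b k) - real (legendre_sum b l) - real (legendre_sum b (k - l))"
  proof -
    have "(\<Sum>i<k. real (m div b ^ Suc i)) = real (legendre_sum b m)" if "m \<le> k" for m
      using legendre_sum_eq_sum[OF b that] by (metis of_nat_sum)
    then show ?thesis
      using \<open>l \<le> k\<close> by (simp only: g_def sum_subtractf diff_le_self order_refl)
  qed
  finally show ?thesis .
qed

lemma beta_eq_digsum:
  assumes b: "b \<ge> 2" and "l \<le> k"
  shows "beta k l b
    = (real (digsum b l) + real (digsum b (k - l)) - real (digsum b k)) / (real b - 1)"
proof -
  have legendre: "(real b - 1) * real (legendre_sum b m) = real m - real (digsum b m)" for m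
  proof -
    have "real ((b - 1) * legendre_sum b m + digsum b m) = real m"
      using legendre_sum_digsum[OF b] by simp
    then show ?thesis
      using b by (simp add: of_nat_diff)
  qed
  have "(real b - 1) * beta k l b
      = real (digsum b l) + real (digsum b (k - l)) - real (digsum b k)"
    unfolding beta_eq_legendre_sum[OF assms] right_diff_distrib legendre
    using \<open>l \<le> k\<close> by (simp add: of_nat_diff)
  then show ?thesis
    using b by (simp add: field_simps)
qed

lemma gen_binom_UNIV:
  assumes "l \<le> k"
  shows "gen_binom UNIV UNIV k l = (\<Prod>b\<in>{2..k}. real b powr beta k l b)"
proof -
  have "gen_binom UNIV UNIV k l = (\<Prod>b\<in>{2..k}.
      real b ^ legendre_sum b k / (real b ^ legendre_sum b l * real b ^ legendre_sum b (k - l)))"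
    unfolding gen_binom_def gen_fact_UNIV[OF order_refl[of k]] gen_fact_UNIV[OF assms]
      gen_fact_UNIV[OF diff_le_self[of k l]]
    by (simp add: prod.distrib prod_dividef)
  also have "\<dots> = (\<Prod>b\<in>{2..k}. real b powr beta k l b)"
    by (intro prod.cong refl) (simp add: beta_eq_legendre_sum[OF _ assms] powr_diff powr_realpow)
  finally show ?thesis .
qed

theorem theorem7p4:
  fixes k l :: nat
  assumes "l \<le> k"
  shows "gen_binom (UNIV :: int set) (UNIV :: nat set) k l
           = (\<Prod>b\<in>{2..k}. real b powr beta k l b) \<and>
         (\<forall>b\<ge>2. beta k l b
           = (real (digsum b l) + real (digsum b (k - l)) - real (digsum b k)) / (real b - 1))"
  using gen_binom_UNIV[OF assms] beta_eq_digsum[OF _ assms] by blast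

end
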